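(* Let $(G_i)_{i\in I}$ be a family of $g$-barrelled convergence groups. Then the product $\prod_{i\in I}G_i$, with the product convergence structure, is $g$-barrelled.
   Context: All groups are abelian. A convergence group is an abelian group with a convergence structure (an assignment to each point $x$ of a collection of filters converging to $x$). This assignment must satisfy three conditions: point ultrafilters converge to their point; finite intersections of filters converging to $x$ converge to $x$; and finer filters converge. The group operation must be compatible: $\mathcal F\to x$, $\mathcal G\to y$ imply $\mathcal F-\mathcal G\to x-y$. In the product convergence structure, a filter converges iff all its coordinate projections converge. $\mathbb T=\mathbb R/\mathbb Z$. $\Gamma G$ is the group of continuous homomorphisms $G\to\mathbb T$, and $\Gamma_s G$ is $\Gamma G$ with the topology of pointwise convergence. A set $M\subseteq\Gamma G$ is equicontinuous if for every filter $\mathcal F\to0$ in $G$, the filter generated by $\{\varphi(x):\varphi\in M, x\in F\}$, $F\in\mathcal F$, converges to $0$ in $\mathbb T$. A convergence group $G$ is $g$-barrelled if every compact subset of $\Gamma_s G$ is equicontinuous. *)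

theory Defs
  imports "HOL-Analysis.Analysis" "HOL-Library.Function_Algebras"
begin

text \<open>A convergence group is modelled as a subgroup S of an ambient abelian group
  type 'a together with a convergence relation c F x ("the proper filter F on S
  converges to x").  Filters on S are filters on 'a containing S.  In Isabelle
  G \<le> F means G is finer than F; the set-intersection of two filters is sup.\<close>

definition conv_group :: "'a::ab_group_add set \<Rightarrow> ('a filter \<Rightarrow> 'a \<Rightarrow> bool) \<Rightarrow> bool" where
  "conv_group S c \<longleftrightarrow>
     0 \<in> S \<and> (\<forall>x\<in>S. \<forall>y\<in>S. x - y \<in> S) \<and>
     (\<forall>F x. c F x \<longrightarrow> x \<in> S \<and> F \<noteq> bot \<and> eventually (\<lambda>y. y \<in> S) F) \<and>
     (\<forall>x\<in>S. c (principal {x}) x) \<and>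
     (\<forall>F G x. c F x \<and> c G x \<longrightarrow> c (sup F G) x) \<and>
     (\<forall>F G x. c F x \<and> G \<le> F \<and> G \<noteq> bot \<longrightarrow> c G x) \<and>
     (\<forall>F G x y. c F x \<and> c G y \<longrightarrow> c (filtermap (\<lambda>(a, b). a - b) (F \<times>\<^sub>F G)) (x - y))"

text \<open>The circle group T = R/Z is represented (isomorphically) as the unit circle in
  the complex numbers, with multiplication as group operation; 1 is the neutral element.
  Characters are normalised to be 1 outside the carrier, so that the pointwise
  topology on Gamma G is the (product) topology on the function space.\<close>

definition characters :: "'a::ab_group_add set \<Rightarrow> ('a filter \<Rightarrow> 'a \<Rightarrow> bool) \<Rightarrow> ('a \<Rightarrow> complex) set" where
  "characters S c = {\<phi>.
     (\<forall>x\<in>S. cmod (\<phi> x) = 1) \<and> (\<forall>x. x \<notin> S \<longrightarrow> \<phi> x = 1) \<and>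
     (\<forall>x\<in>S. \<forall>y\<in>S. \<phi> (x + y) = \<phi> x * \<phi> y) \<and>
     (\<forall>F x. c F x \<longrightarrow> filterlim \<phi> (nhds (\<phi> x)) F)}"

definition equicontinuous :: "('a::ab_group_add filter \<Rightarrow> 'a \<Rightarrow> bool) \<Rightarrow> ('a \<Rightarrow> complex) set \<Rightarrow> bool" where
  "equicontinuous c M \<longleftrightarrow>
     (\<forall>F. c F 0 \<longrightarrow> filterlim (\<lambda>(\<phi>, x). \<phi> x) (nhds 1) (principal M \<times>\<^sub>F F))"

definition g_barrelled :: "'a::ab_group_add set \<Rightarrow> ('a filter \<Rightarrow> 'a \<Rightarrow> bool) \<Rightarrow> bool" where
  "g_barrelled S c \<longleftrightarrow>
     (\<forall>M. M \<subseteq> characters S c \<and> compact M \<longrightarrow> equicontinuous c M)"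

definition prod_carrier :: "('i \<Rightarrow> 'a set) \<Rightarrow> ('i \<Rightarrow> 'a) set" where
  "prod_carrier S = {f. \<forall>i. f i \<in> S i}"

definition prod_conv :: "('i \<Rightarrow> 'a set) \<Rightarrow> ('i \<Rightarrow> 'a filter \<Rightarrow> 'a \<Rightarrow> bool)
    \<Rightarrow> ('i \<Rightarrow> 'a) filter \<Rightarrow> ('i \<Rightarrow> 'a) \<Rightarrow> bool" where
  "prod_conv S c F f \<longleftrightarrow>
     f \<in> prod_carrier S \<and> F \<noteq> bot \<and> eventually (\<lambda>g. g \<in> prod_carrier S) F \<and>
     (\<forall>i. c i (filtermap (\<lambda>g. g i) F) (f i))"

end

theory Submission
  imports Defs
begin

(* Let P be the product of the groups S i with the product convergence structure and
   let M be a compact set of characters of P.  The proof has three steps.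
   1. Every character phi of P is trivial on the subgroup of elements vanishing on
      some finite set J of coordinates: these subgroups generate a filter converging
      to 0, so phi is close to 1 on one of them, and the circle group has no small
      subgroups.  Hence phi x is the product over j in J of phi (unit_vec j (x j)),
      and each a \<mapsto> phi (unit_vec j a) is a character of S j.
   2. Compactness of M yields one finite J that works for all phi in M at once:
      otherwise there is a sequence phi n in M whose supports keep reaching new
      coordinates j n, and one builds, coordinate by coordinate, a point z at which
      all late phi n stay far from 1, whereas a cluster point of (phi n) in M is 1 at z.
   3. For j in J the family of characters a \<mapsto> phi (unit_vec j a), phi in M, is a
      continuous image of M, hence compact, hence equicontinuous as S j is g-barrelled;
      the product of these finitely many uniform limits shows that M is equicontinuous. *)

lemma unit_circle_identities:
  fixes w :: complex assumes "cmod w = 1"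
  shows "Re (w * w) = 2 * (Re w)^2 - 1" and "(cmod (w - 1))^2 = 2 - 2 * Re w"
proof -
  have h: "(Re w)^2 + (Im w)^2 = 1" using assms cmod_power2[of w] by simp
  show "Re (w * w) = 2 * (Re w)^2 - 1" using h by (simp add: power2_eq_square algebra_simps)
  show "(cmod (w - 1))^2 = 2 - 2 * Re w" using h cmod_power2[of "w - 1"]
    by (simp add: power2_eq_square algebra_simps)
qed

(* The circle group has no small subgroups: a unit-valued map that is multiplicative under
   doubling and stays at distance < 1 from 1 on a doubling-closed set is 1 there.  Indeed,
   if theta a \<noteq> 1 then 1 - Re theta grows at least by the factor 3 with every doubling of a. *)
lemma no_small_subgroups:
  fixes \<theta> :: "'b::plus \<Rightarrow> complex"
  assumes double: "\<forall>x\<in>T. x + x \<in> T" and unit: "\<forall>x\<in>T. cmod (\<theta> x) = 1"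
    and mult: "\<forall>x\<in>T. \<theta> (x + x) = \<theta> x * \<theta> x" and near: "\<forall>x\<in>T. cmod (\<theta> x - 1) < 1"
    and a: "a \<in> T"
  shows "\<theta> a = 1"
proof (rule ccontr)
  assume ne: "\<theta> a \<noteq> 1"
  define v where "v k = ((\<lambda>x. x + x) ^^ k) a" for k
  have vT: "v k \<in> T" for k by (induction k) (use a double in \<open>auto simp: v_def\<close>)
  have re_gt: "Re (\<theta> b) > 1/2" if "b \<in> T" for b
  proof -
    have "(cmod (\<theta> b - 1))^2 < 1" using near that by (simp add: power_less_one_iff)
    thus ?thesis using unit_circle_identities(2)[of "\<theta> b"] unit that by simp
  qed
  have re_le: "Re (\<theta> b) \<le> 1" if "b \<in> T" for b
    using complex_Re_le_cmod[of "\<theta> b"] unit that by simp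
  have growth: "1 - Re (\<theta> (v k)) \<ge> 3^k * (1 - Re (\<theta> a))" for k
  proof (induction k)
    case 0 then show ?case by (simp add: v_def)
  next
    case (Suc k)
    let ?w = "\<theta> (v k)"
    have "\<theta> (v (Suc k)) = ?w * ?w" using mult vT by (simp add: v_def)
    hence "1 - Re (\<theta> (v (Suc k))) = 2 * (1 - Re ?w) * (1 + Re ?w)"
      using unit_circle_identities(1)[of ?w] unit vT by (simp add: power2_eq_square algebra_simps)
    also have "\<dots> \<ge> 3 * (1 - Re ?w)"
    proof -
      have "(1 - Re ?w) * (2 * Re ?w - 1) \<ge> 0" using re_gt[OF vT[of k]] re_le[OF vT[of k]] by simp
      thus ?thesis by (simp add: algebra_simps)
    qed
    finally show ?case using Suc by simp
  qed
  have "Re (\<theta> a) \<noteq> 1"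
  proof
    assume r: "Re (\<theta> a) = 1"
    have "(Re (\<theta> a))^2 + (Im (\<theta> a))^2 = 1" using unit a cmod_power2[of "\<theta> a"] by simp
    hence "Im (\<theta> a) = 0" using r by simp
    with r ne show False using complex_eqI by auto
  qed
  hence pos: "1 - Re (\<theta> a) > 0" using re_le[OF a] by simp
  obtain k where "(1/2) / (1 - Re (\<theta> a)) < 3^k"
    using real_arch_pow[of 3 "(1/2) / (1 - Re (\<theta> a))"] by auto
  hence "1/2 < 3^k * (1 - Re (\<theta> a))" using pos by (simp add: field_simps)
  with growth[of k] re_gt[OF vT[of k]] show False by simp
qed

lemma unit_mult_far_from_one:
  fixes u v :: complex
  assumes "cmod u = 1" and "cmod (v - 1) \<ge> 1" and "cmod (u - 1) < 1/2"
  shows "cmod (u * v - 1) \<ge> 1/2"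
proof -
  have "cmod (v - 1) = cmod (u * (v - 1))" using assms(1) by (simp add: norm_mult)
  also have "u * (v - 1) = (u * v - 1) - (u - 1)" by (simp add: algebra_simps)
  also have "cmod \<dots> \<le> cmod (u * v - 1) + cmod (u - 1)" by (rule norm_triangle_ineq4)
  finally show ?thesis using assms(2,3) by linarith
qed

lemma compact_sequence_cluster:
  fixes f :: "nat \<Rightarrow> 'b::topological_space"
  assumes "compact M" and "\<And>n. f n \<in> M"
  obtains p where "p \<in> M" and "\<And>V N. open V \<Longrightarrow> p \<in> V \<Longrightarrow> \<exists>n\<ge>N. f n \<in> V"
proof -
  have "filtermap f sequentially \<noteq> bot" by (simp add: filtermap_bot_iff)
  moreover have "eventually (\<lambda>x. x \<in> M) (filtermap f sequentially)"
    using assms(2) by (simp add: eventually_filtermap)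
  ultimately obtain p where p: "p \<in> M" "inf (nhds p) (filtermap f sequentially) \<noteq> bot"
    using assms(1) unfolding compact_filter by blast
  show ?thesis
  proof (rule that[OF p(1)])
    fix V N assume V: "open V" "p \<in> V"
    show "\<exists>n\<ge>N. f n \<in> V"
    proof (rule ccontr)
      assume "\<not> ?thesis"
      hence "eventually (\<lambda>x. x \<notin> V) (filtermap f sequentially)"
        unfolding eventually_filtermap eventually_sequentially by auto
      moreover have "eventually (\<lambda>x. x \<in> V) (nhds p)" using V by (rule eventually_nhds_in_open)
      ultimately have "eventually (\<lambda>_. False) (inf (nhds p) (filtermap f sequentially))"
        unfolding eventually_inf by blast
      thus False using p(2) by (simp add: eventually_False)
    qed
  qed
qed

(* The elements of the product that vanish on the coordinates in J; for finite J these
   subgroups play the role of basic neighbourhoods of 0. *)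
definition vanishing_on :: "('i \<Rightarrow> 'a::zero set) \<Rightarrow> 'i set \<Rightarrow> ('i \<Rightarrow> 'a) set" where
  "vanishing_on S J = {x \<in> prod_carrier S. \<forall>j\<in>J. x j = 0}"

definition supported_by :: "('i \<Rightarrow> 'a::zero set) \<Rightarrow> (('i \<Rightarrow> 'a) \<Rightarrow> complex) \<Rightarrow> 'i set \<Rightarrow> bool" where
  "supported_by S \<phi> J \<longleftrightarrow> (\<forall>x\<in>vanishing_on S J. \<phi> x = 1)"

definition unit_vec :: "'i \<Rightarrow> 'a::zero \<Rightarrow> ('i \<Rightarrow> 'a)" where
  "unit_vec j a = (\<lambda>i. if i = j then a else 0)"

definition erase :: "'i set \<Rightarrow> ('i \<Rightarrow> 'a::zero) \<Rightarrow> ('i \<Rightarrow> 'a)" where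
  "erase J x = (\<lambda>i. if i \<in> J then 0 else x i)"

definition vanishing_filter :: "('i \<Rightarrow> 'a::zero set) \<Rightarrow> ('i \<Rightarrow> 'a) filter" where
  "vanishing_filter S = (INF J\<in>{J. finite J}. principal (vanishing_on S J))"

lemma vanishing_on_antimono: "J \<subseteq> K \<Longrightarrow> vanishing_on S K \<subseteq> vanishing_on S J"
  by (auto simp: vanishing_on_def)

lemma supported_by_mono: "supported_by S \<phi> J \<Longrightarrow> J \<subseteq> K \<Longrightarrow> supported_by S \<phi> K"
  unfolding supported_by_def using vanishing_on_antimono by blast

lemma unit_vec_zero [simp]: "unit_vec j 0 = 0"
  by (simp add: unit_vec_def fun_eq_iff)

(* The vanishing subgroups form a filter base, since they shrink as J grows. *)
lemma eventually_vanishing_filter: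
  "eventually Q (vanishing_filter S) \<longleftrightarrow> (\<exists>J. finite J \<and> (\<forall>x\<in>vanishing_on S J. Q x))"
  unfolding vanishing_filter_def
proof (subst eventually_INF_base)
  show "{J. finite J} \<noteq> {}" by blast
  show "\<exists>L\<in>{J. finite J}. principal (vanishing_on S L) \<le>
          inf (principal (vanishing_on S J)) (principal (vanishing_on S K))"
    if "J \<in> {J. finite J}" "K \<in> {J. finite J}" for J K
    using that vanishing_on_antimono[of J "J \<union> K" S] vanishing_on_antimono[of K "J \<union> K" S]
    by (intro bexI[of _ "J \<union> K"]) auto
qed (simp add: eventually_principal)

lemma coordinate_updates:
  fixes jj :: "nat \<Rightarrow> 'i" and b :: "nat \<Rightarrow> 'a::monoid_add"
  assumes inj: "inj jj" and Z_0: "Z 0 = 0" and Z_Suc: "\<And>n. Z (Suc n) = Z n + unit_vec (jj n) (b n)"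
  shows "Z n = (\<lambda>i. if i \<in> jj ` {..<n} then b (inv jj i) else 0)"
proof (induction n)
  case 0 show ?case by (simp add: Z_0 fun_eq_iff)
next
  case (Suc n)
  have "jj n \<notin> jj ` {..<n}" using inj by (auto simp: inj_eq)
  with Suc show ?case using inv_f_f[OF inj]
    by (auto simp: Z_Suc unit_vec_def fun_eq_iff lessThan_Suc)
qed

locale conv_group_family =
  fixes S :: "'i \<Rightarrow> 'a::ab_group_add set" and c :: "'i \<Rightarrow> 'a filter \<Rightarrow> 'a \<Rightarrow> bool"
  assumes conv_group: "\<And>i. conv_group (S i) (c i)"
begin

abbreviation "P \<equiv> prod_carrier S"
abbreviation "C \<equiv> prod_conv S c"

lemma zero_mem: "0 \<in> S i"
  using conv_group[of i] unfolding conv_group_def by (elim conjE)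

lemma diff_mem: "x \<in> S i \<Longrightarrow> y \<in> S i \<Longrightarrow> x - y \<in> S i"
  using conv_group[of i] unfolding conv_group_def by (elim conjE) blast

lemma add_mem: "x \<in> S i \<Longrightarrow> y \<in> S i \<Longrightarrow> x + y \<in> S i"
  using diff_mem[of x i "- y"] diff_mem[OF zero_mem, of y i] by simp

lemma conv_limit: "c i F x \<Longrightarrow> x \<in> S i \<and> F \<noteq> bot \<and> eventually (\<lambda>y. y \<in> S i) F"
  using conv_group[of i] unfolding conv_group_def by (elim conjE) blast

lemma conv_to_zero: "F \<le> principal {0} \<Longrightarrow> F \<noteq> bot \<Longrightarrow> c i F 0"
  using conv_group[of i] zero_mem[of i] unfolding conv_group_def by (elim conjE) blast

lemma prod_zero: "0 \<in> P"
  by (simp add: prod_carrier_def zero_mem)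

lemma prod_add: "x \<in> P \<Longrightarrow> y \<in> P \<Longrightarrow> x + y \<in> P"
  by (simp add: prod_carrier_def add_mem)

lemma prod_diff: "x \<in> P \<Longrightarrow> y \<in> P \<Longrightarrow> x - y \<in> P"
  by (simp add: prod_carrier_def diff_mem)

lemma unit_vec_mem: "a \<in> S j \<Longrightarrow> unit_vec j a \<in> P"
  by (simp add: prod_carrier_def unit_vec_def zero_mem)

lemma erase_mem: "x \<in> P \<Longrightarrow> erase J x \<in> P"
  by (simp add: erase_def prod_carrier_def zero_mem)

(* The vanishing filter converges to 0 in the product: each coordinate projection of it
   is the point filter of 0. *)
lemma vanishing_filter_conv: "C (vanishing_filter S) 0"
  unfolding prod_conv_def
proof (intro conjI allI)
  have zero_vanishing: "0 \<in> vanishing_on S J" for J by (simp add: vanishing_on_def prod_zero)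
  show nonbot: "vanishing_filter S \<noteq> bot"
    using eventually_vanishing_filter[of "\<lambda>_. False" S] zero_vanishing by (auto simp: eventually_False)
  show "0 \<in> P" by (rule prod_zero)
  show "eventually (\<lambda>g. g \<in> P) (vanishing_filter S)"
    unfolding eventually_vanishing_filter by (auto simp: vanishing_on_def)
  fix i
  have "filtermap (\<lambda>g. g i) (vanishing_filter S) \<le> principal {0}"
    unfolding le_principal eventually_filtermap eventually_vanishing_filter
    by (rule exI[of _ "{i}"]) (simp add: vanishing_on_def)
  with nonbot show "c i (filtermap (\<lambda>g. g i) (vanishing_filter S)) (0 i)"
    by (simp add: conv_to_zero filtermap_bot_iff)
qed

lemma unit_vec_conv:
  assumes cF: "c j F a"
  shows "C (filtermap (unit_vec j) F) (unit_vec j a)"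
  unfolding prod_conv_def
proof (intro conjI allI)
  have a: "a \<in> S j" and nonbot: "F \<noteq> bot" and evS: "eventually (\<lambda>y. y \<in> S j) F"
    using conv_limit[OF cF] by auto
  show "unit_vec j a \<in> P" using a by (rule unit_vec_mem)
  show "filtermap (unit_vec j) F \<noteq> bot" using nonbot by (simp add: filtermap_bot_iff)
  show "eventually (\<lambda>g. g \<in> P) (filtermap (unit_vec j) F)"
    unfolding eventually_filtermap using evS by (rule eventually_mono) (rule unit_vec_mem)
  fix i
  show "c i (filtermap (\<lambda>g. g i) (filtermap (unit_vec j) F)) (unit_vec j a i)"
  proof (cases "i = j")
    case True
    then show ?thesis using cF by (simp add: filtermap_filtermap unit_vec_def filtermap_ident)
  next
    case False
    have "filtermap (\<lambda>g. g i) (filtermap (unit_vec j) F) \<le> principal {0}"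
      using False by (simp add: filtermap_filtermap unit_vec_def le_principal eventually_filtermap)
    with False nonbot show ?thesis by (simp add: conv_to_zero filtermap_bot_iff unit_vec_def)
  qed
qed

context
  fixes \<phi> assumes char: "\<phi> \<in> characters P C"
begin

lemma char_unit: "x \<in> P \<Longrightarrow> cmod (\<phi> x) = 1"
  using char by (simp add: characters_def)

lemma char_outside: "x \<notin> P \<Longrightarrow> \<phi> x = 1"
  using char by (simp add: characters_def)

lemma char_mult: "x \<in> P \<Longrightarrow> y \<in> P \<Longrightarrow> \<phi> (x + y) = \<phi> x * \<phi> y"
  using char by (simp add: characters_def)

lemma char_cont: "C F x \<Longrightarrow> filterlim \<phi> (nhds (\<phi> x)) F"
  using char by (simp add: characters_def)

lemma char_zero: "\<phi> 0 = 1"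
proof -
  have "\<phi> 0 * \<phi> 0 = \<phi> 0 * 1" using char_mult[OF prod_zero prod_zero] by simp
  moreover have "\<phi> 0 \<noteq> 0" using char_unit[OF prod_zero] by auto
  ultimately show ?thesis by (metis mult_left_cancel)
qed

(* By continuity
   at 0 along the vanishing filter, phi stays within distance 1 of 1 on some vanishing
   subgroup, and there it must be identically 1 by the absence of small subgroups. *)
lemma char_finitely_supported: "\<exists>J. finite J \<and> supported_by S \<phi> J"
proof -
  have "filterlim \<phi> (nhds 1) (vanishing_filter S)"
    using char_cont[OF vanishing_filter_conv] char_zero by simp
  hence "eventually (\<lambda>x. dist (\<phi> x) 1 < 1) (vanishing_filter S)" by (rule tendstoD) simp
  then obtain J where J: "finite J" "\<forall>x\<in>vanishing_on S J. cmod (\<phi> x - 1) < 1"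
    unfolding eventually_vanishing_filter dist_norm by blast
  have sub: "vanishing_on S J \<subseteq> P" by (auto simp: vanishing_on_def)
  have "\<phi> x = 1" if "x \<in> vanishing_on S J" for x
  proof (rule no_small_subgroups[OF _ _ _ J(2) that])
    show "\<forall>x\<in>vanishing_on S J. x + x \<in> vanishing_on S J"
      by (simp add: vanishing_on_def prod_add)
    show "\<forall>x\<in>vanishing_on S J. cmod (\<phi> x) = 1" using sub char_unit by blast
    show "\<forall>x\<in>vanishing_on S J. \<phi> (x + x) = \<phi> x * \<phi> x" using sub char_mult by blast
  qed
  with J(1) show ?thesis unfolding supported_by_def by blast
qed

lemma char_split:
  assumes "finite J" "x \<in> P"
  shows "\<phi> x = (\<Prod>j\<in>J. \<phi> (unit_vec j (x j))) * \<phi> (erase J x)"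
  using assms(1)
proof (induction J rule: finite_induct)
  case empty
  then show ?case by (simp add: erase_def)
next
  case (insert j J)
  have xj: "x j \<in> S j" using assms(2) by (simp add: prod_carrier_def)
  have "erase J x = unit_vec j (x j) + erase (insert j J) x"
    using insert(2) by (auto simp: erase_def unit_vec_def fun_eq_iff)
  hence "\<phi> (erase J x) = \<phi> (unit_vec j (x j)) * \<phi> (erase (insert j J) x)"
    using char_mult[OF unit_vec_mem[OF xj] erase_mem[OF assms(2)]] by simp
  with insert show ?case by (simp add: mult.assoc)
qed

lemma char_factor:
  assumes "finite J" "supported_by S \<phi> J" "x \<in> P"
  shows "\<phi> x = (\<Prod>j\<in>J. \<phi> (unit_vec j (x j)))"
proof -
  have "erase J x \<in> vanishing_on S J"
    using erase_mem[OF assms(3)] by (simp add: vanishing_on_def erase_def)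
  with assms char_split[OF assms(1,3)] show ?thesis by (simp add: supported_by_def)
qed

lemma char_congr:
  assumes "supported_by S \<phi> K" "x \<in> P" "y \<in> P" "x - y \<in> vanishing_on S K"
  shows "\<phi> x = \<phi> y"
proof -
  have "\<phi> x = \<phi> (y + (x - y))" by simp
  also have "\<dots> = \<phi> y" using char_mult[OF assms(3) prod_diff[OF assms(2,3)]] assms(1,4)
    by (simp add: supported_by_def)
  finally show ?thesis .
qed

lemma coordinate_character: "(\<lambda>a. \<phi> (unit_vec j a)) \<in> characters (S j) (c j)"
  unfolding characters_def
proof (intro CollectI conjI ballI allI impI)
  fix a assume "a \<in> S j" thus "cmod (\<phi> (unit_vec j a)) = 1" by (intro char_unit unit_vec_mem)
next
  fix a assume "a \<notin> S j"
  hence "unit_vec j a \<notin> P" unfolding prod_carrier_def unit_vec_def by auto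
  thus "\<phi> (unit_vec j a) = 1" by (rule char_outside)
next
  fix a b assume "a \<in> S j" "b \<in> S j"
  moreover have "unit_vec j (a + b) = unit_vec j a + unit_vec j b"
    by (simp add: unit_vec_def fun_eq_iff)
  ultimately show "\<phi> (unit_vec j (a + b)) = \<phi> (unit_vec j a) * \<phi> (unit_vec j b)"
    by (simp add: char_mult unit_vec_mem)
next
  fix F a assume "c j F a"
  from char_cont[OF unit_vec_conv[OF this]]
  show "filterlim (\<lambda>a. \<phi> (unit_vec j a)) (nhds (\<phi> (unit_vec j a))) F"
    by (simp add: filterlim_filtermap)
qed

lemma char_push_away:
  assumes a: "a \<in> S j" "\<phi> (unit_vec j a) \<noteq> 1" and w: "w \<in> P"
  shows "\<exists>b\<in>S j. cmod (\<phi> (w + unit_vec j b) - 1) \<ge> 1/2"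
proof -
  have far: "\<exists>b\<in>S j. cmod (\<phi> (unit_vec j b) - 1) \<ge> 1"
  proof (rule ccontr)
    assume "\<not> ?thesis"
    hence "\<forall>b\<in>S j. cmod (\<phi> (unit_vec j b) - 1) < 1" by auto
    moreover have "\<forall>b\<in>S j. b + b \<in> S j" by (simp add: add_mem)
    moreover have "\<forall>b\<in>S j. cmod (\<phi> (unit_vec j b)) = 1"
      "\<forall>b\<in>S j. \<phi> (unit_vec j (b + b)) = \<phi> (unit_vec j b) * \<phi> (unit_vec j b)"
      using coordinate_character[of j] by (simp_all add: characters_def)
    ultimately have "\<phi> (unit_vec j a) = 1"
      using no_small_subgroups[where \<theta>="\<lambda>b. \<phi> (unit_vec j b)", OF _ _ _ _ a(1)] by blast
    with a(2) show False ..
  qed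
  show ?thesis
  proof (cases "cmod (\<phi> w - 1) \<ge> 1/2")
    case True
    thus ?thesis using zero_mem[of j] by (intro bexI[of _ 0]) simp_all
  next
    case False
    from far obtain b where b: "b \<in> S j" "cmod (\<phi> (unit_vec j b) - 1) \<ge> 1" by blast
    have "cmod (\<phi> w * \<phi> (unit_vec j b) - 1) \<ge> 1/2"
      using unit_mult_far_from_one[OF char_unit[OF w] b(2)] False by simp
    thus ?thesis using b(1) char_mult[OF w unit_vec_mem[OF b(1)]] by (intro bexI[of _ b]) simp_all
  qed
qed

end

(* If no finite set of coordinates supports all of M, then outside any finite set K some
   member of M is nontrivial on some factor: factor a witness against K by char_factor. *)
lemma new_coordinate:
  assumes M: "M \<subseteq> characters P C"
    and no_uniform: "\<not> (\<exists>J. finite J \<and> (\<forall>\<phi>\<in>M. supported_by S \<phi> J))"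
    and K: "finite K"
  shows "\<exists>\<phi> j a. \<phi> \<in> M \<and> j \<notin> K \<and> a \<in> S j \<and> \<phi> (unit_vec j a) \<noteq> 1"
proof -
  from no_uniform K obtain \<phi> where \<phi>: "\<phi> \<in> M" "\<not> supported_by S \<phi> K" by blast
  then obtain x where x: "x \<in> vanishing_on S K" "\<phi> x \<noteq> 1" unfolding supported_by_def by blast
  have char: "\<phi> \<in> characters P C" using \<phi>(1) M by blast
  have xP: "x \<in> P" using x(1) by (simp add: vanishing_on_def)
  obtain J where J: "finite J" "supported_by S \<phi> J" using char_finitely_supported[OF char] by blast
  have "\<exists>j. \<phi> (unit_vec j (x j)) \<noteq> 1"
  proof (rule ccontr)
    assume "\<not> ?thesis"
    hence "(\<Prod>j\<in>J. \<phi> (unit_vec j (x j))) = 1" by simp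
    with x(2) char_factor[OF char J xP] show False by simp
  qed
  then obtain j where j: "\<phi> (unit_vec j (x j)) \<noteq> 1" ..
  have "j \<notin> K"
  proof
    assume "j \<in> K"
    hence "x j = 0" using x(1) by (simp add: vanishing_on_def)
    thus False using j char_zero[OF char] by simp
  qed
  moreover have "x j \<in> S j" using xP by (simp add: prod_carrier_def)
  ultimately show ?thesis using \<phi>(1) j by blast
qed

(* Iterating new_coordinate: characters ph n in M, distinct coordinates jj n and growing
   finite sets K n such that ph n is supported by K (Suc n) and nontrivial on the factor
   jj n, where jj n is new at stage n (not in K n) and recorded afterwards. *)
lemma escaping_sequence:
  assumes M: "M \<subseteq> characters P C"
    and no_uniform: "\<not> (\<exists>J. finite J \<and> (\<forall>\<phi>\<in>M. supported_by S \<phi> J))"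
  obtains ph K jj where
    "\<And>n. ph n \<in> M" "\<And>n. supported_by S (ph n) (K (Suc n))"
    "\<And>n. \<exists>a\<in>S (jj n). ph n (unit_vec (jj n) a) \<noteq> 1"
    "\<And>m n. m \<le> n \<Longrightarrow> K m \<subseteq> K n" "\<And>n. jj n \<notin> K n" "inj jj"
proof -
  have "\<forall>\<phi>\<in>M. \<exists>J. finite J \<and> supported_by S \<phi> J" using char_finitely_supported M by blast
  then obtain supp where supp: "\<And>\<phi>. \<phi> \<in> M \<Longrightarrow> finite (supp \<phi>) \<and> supported_by S \<phi> (supp \<phi>)"
    by metis
  obtain \<psi> j a where new: "\<And>L. finite L \<Longrightarrow>
      \<psi> L \<in> M \<and> j L \<notin> L \<and> a L \<in> S (j L) \<and> \<psi> L (unit_vec (j L) (a L)) \<noteq> 1"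
    using new_coordinate[OF M no_uniform] by metis
  define K where "K = rec_nat {} (\<lambda>_ L. L \<union> supp (\<psi> L) \<union> {j L})"
  have K_Suc: "K (Suc n) = K n \<union> supp (\<psi> (K n)) \<union> {j (K n)}" for n
    by (simp add: K_def)
  have K_finite: "finite (K n)" for n
  proof (induction n)
    case 0 show ?case by (simp add: K_def)
  next
    case (Suc n) thus ?case using supp new[OF Suc] by (simp add: K_Suc)
  qed
  have K_mono: "K m \<subseteq> K n" if "m \<le> n" for m n
    using lift_Suc_mono_le[of K, OF _ that] K_Suc by blast
  have j_recorded: "j (K m) \<in> K n" if "m < n" for m n
    using K_mono[of "Suc m" n] that K_Suc by auto
  show ?thesis
  proof (rule that[of "\<lambda>n. \<psi> (K n)" K "\<lambda>n. j (K n)"])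
    show "\<psi> (K n) \<in> M" for n using new K_finite by blast
    show "supported_by S (\<psi> (K n)) (K (Suc n))" for n
      using supp[of "\<psi> (K n)"] new[OF K_finite[of n]] by (auto simp: K_Suc intro: supported_by_mono)
    show "\<exists>b\<in>S (j (K n)). \<psi> (K n) (unit_vec (j (K n)) b) \<noteq> 1" for n
      using new[OF K_finite[of n]] by blast
    show "K m \<subseteq> K n" if "m \<le> n" for m n using K_mono that .
    show "j (K n) \<notin> K n" for n using new K_finite by blast
    show "inj (\<lambda>n. j (K n))"
      by (rule linorder_injI) (metis j_recorded new K_finite)
  qed
qed

(* For such a sequence and any N there is a point z, supported on the coordinates jj n
   with n \<ge> N, at which every ph n with n \<ge> N is at least 1/2 away from 1.  Its
   coordinates are chosen one after another by char_push_away; later choices do not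
   affect earlier ph n, since ph n only sees the coordinates in K (Suc n). *)
lemma escaping_point:
  fixes ph :: "nat \<Rightarrow> ('i \<Rightarrow> 'a) \<Rightarrow> complex" and jj :: "nat \<Rightarrow> 'i"
  assumes ph: "\<And>n. ph n \<in> characters P C" "\<And>n. supported_by S (ph n) (K (Suc n))"
    "\<And>n. \<exists>a\<in>S (jj n). ph n (unit_vec (jj n) a) \<noteq> 1"
    and K: "\<And>m n. m \<le> n \<Longrightarrow> K m \<subseteq> K n" "\<And>n. jj n \<notin> K n" and inj: "inj jj"
  obtains z where "z \<in> P" "\<And>i. i \<notin> jj ` {N..} \<Longrightarrow> z i = 0"
    "\<And>n. N \<le> n \<Longrightarrow> cmod (ph n z - 1) \<ge> 1/2"
proof -
  define push where "push n w = (SOME b. b \<in> S (jj n) \<and>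
      cmod (ph n (w + unit_vec (jj n) b) - 1) \<ge> 1/2)" for n w
  have push: "push n w \<in> S (jj n) \<and> cmod (ph n (w + unit_vec (jj n) (push n w)) - 1) \<ge> 1/2"
    if "w \<in> P" for n w
    unfolding push_def by (rule someI_ex) (use char_push_away[OF ph(1) _ _ that] ph(3) in blast)
  define Z where "Z = rec_nat 0 (\<lambda>n w. w + unit_vec (jj n) (if n < N then 0 else push n w))"
  define b where "b n = (if n < N then 0 else push n (Z n))" for n
  have Z_0: "Z 0 = 0" by (simp add: Z_def)
  have Z_Suc: "Z (Suc n) = Z n + unit_vec (jj n) (b n)" for n
    by (simp add: Z_def b_def)
  have Z_mem: "Z n \<in> P" and b_mem: "b n \<in> S (jj n)" for n
  proof -
    show Z_mem: "Z n \<in> P" for n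
    proof (induction n)
      case 0 show ?case unfolding Z_0 by (rule prod_zero)
    next
      case (Suc n)
      have "b n \<in> S (jj n)" using push[OF Suc] by (simp add: b_def zero_mem)
      thus ?case unfolding Z_Suc using Suc by (intro prod_add unit_vec_mem)
    qed
    show "b n \<in> S (jj n)" using push[OF Z_mem] by (simp add: b_def zero_mem)
  qed
  define z where "z i = (if i \<in> range jj then b (inv jj i) else 0)" for i
  have z_mem: "z \<in> P" using b_mem zero_mem by (auto simp: z_def prod_carrier_def inv_f_f[OF inj])
  show ?thesis
  proof (rule that[OF z_mem])
    show "z i = 0" if i: "i \<notin> jj ` {N..}" for i
    proof (cases "i \<in> range jj")
      case True
      then obtain m where m: "i = jj m" by blast
      with i have "m < N" by (metis atLeast_iff image_eqI not_le)
      with m show ?thesis by (simp add: z_def b_def inv_f_f[OF inj])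
    qed (simp add: z_def)
    fix n assume n: "N \<le> n"
    have "z - Z (Suc n) \<in> vanishing_on S (K (Suc n))"
      unfolding vanishing_on_def
    proof (intro CollectI conjI ballI)
      show "z - Z (Suc n) \<in> P" using z_mem Z_mem by (rule prod_diff)
      fix i assume i: "i \<in> K (Suc n)"
      have "m < Suc n" if "i = jj m" for m
        using K(1)[of "Suc n" m] K(2)[of m] i that by (metis not_le subsetD)
      thus "(z - Z (Suc n)) i = 0"
        by (auto simp: z_def coordinate_updates[OF inj Z_0 Z_Suc] inv_f_f[OF inj])
    qed
    hence "ph n z = ph n (Z (Suc n))"
      by (rule char_congr[OF ph(1,2) z_mem Z_mem])
    thus "cmod (ph n z - 1) \<ge> 1/2" using push[OF Z_mem[of n]] n by (simp add: Z_Suc b_def)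
  qed
qed

(* Otherwise take an escaping sequence, a cluster point phi of it in M and a finite support J
   of phi; the point z of escaping_point for large N vanishes on J, so phi z = 1, while the
   ph n with n \<ge> N, which come arbitrarily close to phi at z, are all far from 1 at z. *)
lemma uniform_support:
  assumes M: "compact M" "M \<subseteq> characters P C"
  shows "\<exists>J. finite J \<and> (\<forall>\<phi>\<in>M. supported_by S \<phi> J)"
proof (rule ccontr)
  assume no_uniform: "\<not> ?thesis"
  obtain ph K jj where seq: "\<And>n. ph n \<in> M" "\<And>n. supported_by S (ph n) (K (Suc n))"
    "\<And>n. \<exists>a\<in>S (jj n). ph n (unit_vec (jj n) a) \<noteq> 1"
    "\<And>m n. m \<le> n \<Longrightarrow> K m \<subseteq> K n" "\<And>n. jj n \<notin> K n" "inj jj"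
    using escaping_sequence[OF M(2) no_uniform] by metis
  obtain \<phi> where \<phi>: "\<phi> \<in> M" and cluster: "\<And>V N. open V \<Longrightarrow> \<phi> \<in> V \<Longrightarrow> \<exists>n\<ge>N. ph n \<in> V"
    using compact_sequence_cluster[of M ph, OF M(1) seq(1)] by metis
  have "\<phi> \<in> characters P C" using \<phi> M(2) by blast
  then obtain J where J: "finite J" "supported_by S \<phi> J"
    using char_finitely_supported by blast
  obtain N where N: "jj -` J \<subseteq> {..<N}"
    using finite_nat_bounded[OF finite_vimageI[OF J(1) seq(6)]] by blast
  have ph_char: "ph n \<in> characters P C" for n using seq(1) M(2) by blast
  obtain z where z: "z \<in> P" "\<And>i. i \<notin> jj ` {N..} \<Longrightarrow> z i = 0"
    "\<And>n. N \<le> n \<Longrightarrow> cmod (ph n z - 1) \<ge> 1/2"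
    using escaping_point[OF ph_char seq(2-6)] by metis
  have "z j = 0" if "j \<in> J" for j
  proof (rule z(2))
    show "j \<notin> jj ` {N..}" using N that by auto
  qed
  with z(1) have "z \<in> vanishing_on S J" by (simp add: vanishing_on_def)
  hence "\<phi> \<in> {\<psi>. cmod (\<psi> z - 1) < 1/2}" using J(2) by (simp add: supported_by_def)
  moreover have "open {\<psi> :: ('i \<Rightarrow> 'a) \<Rightarrow> complex. cmod (\<psi> z - 1) < 1/2}"
    by (rule open_Collect_less) (intro continuous_intros continuous_on_product_coordinates)+
  ultimately obtain n where "N \<le> n" "cmod (ph n z - 1) < 1/2" using cluster by blast
  with z(3) show False by (meson not_le)
qed

(* Step 3 for one factor: if S j is g-barrelled, the restrictions to the j-th factor of a
   compact set M of characters of the product form a compact, hence equicontinuous, set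
   of characters of S j, so they tend to 1 uniformly on M along any filter converging to 0. *)
lemma coordinate_equicontinuous:
  assumes gb: "g_barrelled (S j) (c j)" and M: "compact M" "M \<subseteq> characters P C"
    and F: "C F 0"
  shows "((\<lambda>(\<phi>, x). \<phi> (unit_vec j (x j))) \<longlongrightarrow> 1) (principal M \<times>\<^sub>F F)"
proof -
  define restrict where "restrict \<phi> = (\<lambda>a. \<phi> (unit_vec j a))" for \<phi> :: "('i \<Rightarrow> 'a) \<Rightarrow> complex"
  have "restrict ` M \<subseteq> characters (S j) (c j)"
    using M(2) coordinate_character by (auto simp: restrict_def)
  moreover have "compact (restrict ` M)"
  proof (rule compact_continuous_image[OF _ M(1)])
    have "continuous_on UNIV restrict" unfolding restrict_def
      by (intro continuous_on_coordinatewise_then_product continuous_on_product_coordinates)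
    thus "continuous_on M restrict" by (rule continuous_on_subset) simp
  qed
  ultimately have "equicontinuous (c j) (restrict ` M)" using gb by (simp add: g_barrelled_def)
  moreover have "c j (filtermap (\<lambda>x. x j) F) 0" using F by (simp add: prod_conv_def)
  ultimately have "filterlim (\<lambda>(\<psi>, a). \<psi> a) (nhds 1)
      (principal (restrict ` M) \<times>\<^sub>F filtermap (\<lambda>x. x j) F)"
    by (simp add: equicontinuous_def)
  thus ?thesis
    unfolding filtermap_principal[symmetric] prod_filtermap1 prod_filtermap2 filterlim_filtermap
    by (simp add: restrict_def case_prod_unfold)
qed

(* The product of g-barrelled groups is g-barrelled: a compact M is supported by one finite
   set J, so each phi in M is the finite product over j in J of its restrictions to the
   factors, and each of these tends to 1 uniformly on M by coordinate_equicontinuous. *)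
lemma prod_g_barrelled:
  assumes gb: "\<And>i. g_barrelled (S i) (c i)"
  shows "g_barrelled P C"
  unfolding g_barrelled_def equicontinuous_def
proof (intro allI impI)
  fix M F assume M: "M \<subseteq> characters P C \<and> compact M" and F: "C F 0"
  obtain J where J: "finite J" "\<forall>\<phi>\<in>M. supported_by S \<phi> J"
    using uniform_support M by blast
  have "((\<lambda>p. \<Prod>j\<in>J. (\<lambda>(\<phi>, x). \<phi> (unit_vec j (x j))) p) \<longlongrightarrow> (\<Prod>j\<in>J. 1)) (principal M \<times>\<^sub>F F)"
    using M by (intro tendsto_prod coordinate_equicontinuous[OF gb _ _ F]) auto
  moreover have "eventually (\<lambda>p. (\<Prod>j\<in>J. (\<lambda>(\<phi>, x). \<phi> (unit_vec j (x j))) p) = (\<lambda>(\<phi>, x). \<phi> x) p)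
      (principal M \<times>\<^sub>F F)"
    unfolding eventually_prod_filter
  proof (intro exI conjI allI impI)
    show "eventually (\<lambda>\<phi>. \<phi> \<in> M) (principal M)" by (simp add: eventually_principal)
    show "eventually (\<lambda>x. x \<in> P) F" using F by (simp add: prod_conv_def)
    fix \<phi> x assume "\<phi> \<in> M" "x \<in> P"
    thus "(\<Prod>j\<in>J. (\<lambda>(\<phi>, x). \<phi> (unit_vec j (x j))) (\<phi>, x)) = (\<lambda>(\<phi>, x). \<phi> x) (\<phi>, x)"
      using char_factor[of \<phi> J x] J M by auto
  qed
  ultimately show "filterlim (\<lambda>(\<phi>, x). \<phi> x) (nhds 1) (principal M \<times>\<^sub>F F)"
    using tendsto_cong by fastforce
qed

end

theorem proposition2p9:
  fixes S :: "'i \<Rightarrow> 'a::ab_group_add set"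
    and c :: "'i \<Rightarrow> 'a filter \<Rightarrow> 'a \<Rightarrow> bool"
  assumes "\<And>i. conv_group (S i) (c i)"
    and "\<And>i. g_barrelled (S i) (c i)"
  shows "g_barrelled (prod_carrier S) (prod_conv S c)"
proof -
  interpret conv_group_family S c by unfold_locales (rule assms(1))
  show ?thesis by (rule prod_g_barrelled[OF assms(2)])
qed

end
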